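(* If $A=(A_m)_{m=0}^\infty$ is an Appell sequence, then for $n\ge2$, \[ \operatorname{Var}\left(A_\lambda(x):\lambda\vdash n\right) = \mathbb{E}\left(A^2_{\lambda}(x):\lambda\vdash n\right) - \mathbb{E}\bigl(A_{\lambda}(x):\lambda\vdash n\bigr)^2 = O(x^{2n-4}), \] i.e. this variance is a polynomial in $x$ of degree at most $2n-4$.
   Context: An Appell sequence is a sequence of polynomials $(A_m)_{m\ge0}$ with $A_0=1$ and $A_m'=mA_{m-1}$ for $m\ge1$. For a partition $\lambda$ of length $r$, let $(n_1,\dots,n_r)=(\lambda_r,\lambda_{r-1}+1,\dots,\lambda_1+r-1)$ and $A_\lambda=\operatorname{Wr}[A_{n_1},\dots,A_{n_r}]/\Delta(n_1,\dots,n_r)$, where $\operatorname{Wr}$ is the Wronskian and $\Delta$ the Vandermonde determinant $\prod_{i<j}(x_j-x_i)$. Expectations and variance are with respect to Plancherel measure $\mathbb{P}(\lambda)=F_\lambda^2/n!$ on partitions $\lambda\vdash n$, $F_\lambda$ being the number of standard Young tableaux of shape $\lambda$. *)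

theory Defs
  imports "HOL-Computational_Algebra.Polynomial" "HOL-Library.FuncSet"
          "Jordan_Normal_Form.Determinant"
begin

definition appell :: "(nat \<Rightarrow> 'a::field_char_0 poly) \<Rightarrow> bool" where
  "appell A \<longleftrightarrow> A 0 = 1 \<and> (\<forall>m\<ge>1. pderiv (A m) = smult (of_nat m) (A (m - 1)))"

definition is_partition :: "nat list \<Rightarrow> bool" where
  "is_partition lam \<longleftrightarrow> sorted_wrt (\<ge>) lam \<and> (\<forall>p\<in>set lam. 0 < p)"

definition partitions_of :: "nat \<Rightarrow> nat list set" where
  "partitions_of n = {lam. is_partition lam \<and> sum_list lam = n}"

(* Young diagram cells (i,j), 0-indexed: row i < r, column j < lambda_(i+1) *)
definition cells :: "nat list \<Rightarrow> (nat \<times> nat) set" where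
  "cells lam = {(i, j). i < length lam \<and> j < lam ! i}"

definition SYT :: "nat list \<Rightarrow> ((nat \<times> nat) \<Rightarrow> nat) set" where
  "SYT lam = {T \<in> cells lam \<rightarrow>\<^sub>E {1..sum_list lam}.
      bij_betw T (cells lam) {1..sum_list lam} \<and>
      (\<forall>i j. (i, j + 1) \<in> cells lam \<longrightarrow> T (i, j) < T (i, j + 1)) \<and>
      (\<forall>i j. (i + 1, j) \<in> cells lam \<longrightarrow> T (i, j) < T (i + 1, j))}"

definition num_SYT :: "nat list \<Rightarrow> nat" where
  "num_SYT lam = card (SYT lam)"

(* (n_1,...,n_r) = (lambda_r, lambda_(r-1)+1, ..., lambda_1+r-1), 0-indexed: n_k = lambda_(r-k) + (k-1) *)
definition shifted_parts :: "nat list \<Rightarrow> nat list" where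
  "shifted_parts lam = map (\<lambda>k. rev lam ! k + k) [0..<length lam]"

definition wronskian :: "'a::idom poly list \<Rightarrow> 'a poly" where
  "wronskian fs = det (mat (length fs) (length fs) (\<lambda>(i, j). (pderiv ^^ i) (fs ! j)))"

definition vandermonde :: "nat list \<Rightarrow> int" where
  "vandermonde xs = (\<Prod>j<length xs. \<Prod>i<j. int (xs ! j) - int (xs ! i))"

definition appell_schur :: "(nat \<Rightarrow> 'a::field_char_0 poly) \<Rightarrow> nat list \<Rightarrow> 'a poly" where
  "appell_schur A lam =
     smult (inverse (of_int (vandermonde (shifted_parts lam))))
           (wronskian (map A (shifted_parts lam)))"

definition plancherel :: "nat \<Rightarrow> nat list \<Rightarrow> 'a::field_char_0" where
  "plancherel n lam = of_nat (num_SYT lam ^ 2) / of_nat (fact n)"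

definition plancherel_expect :: "nat \<Rightarrow> (nat list \<Rightarrow> 'a::field_char_0 poly) \<Rightarrow> 'a poly" where
  "plancherel_expect n f = (\<Sum>lam\<in>partitions_of n. smult (plancherel n lam) (f lam))"

end

(* Write y = x + a, where a is the constant term of A_1. Since A_m and y^m both have
   derivative m times their predecessor and agree for m <= 1, A_m - y^m has degree at most
   m - 2. Expanding the Wronskian over permutations, Wr[A_n1, ..., A_nr] therefore differs
   from Wr[y^n1, ..., y^nr] = Delta(n_1, ..., n_r) y^|lambda| by terms of degree at most
   |lambda| - 2, i.e. A_lambda = y^n + Q_lambda with deg Q_lambda <= n - 2. Plancherel measure
   has total mass 1 (the sum of F_lambda^2 over lambda |- n is n!, by the up-down identity of
   Young's lattice), so the variance of A_lambda is that of Q_lambda, namely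
   E(Q_lambda^2) - E(Q_lambda)^2, which has degree at most 2n - 4. *)

theory Submission
  imports Defs
begin

section \<open>Young diagrams and standard Young tableaux\<close>

text \<open>Tableaux are defined on an arbitrary finite set of cells, as in \<^const>\<open>SYT\<close>, so that
  cells can be added and removed without re-encoding the shape as a partition.\<close>

definition down_closed :: "(nat \<times> nat) set \<Rightarrow> bool" where
  "down_closed D \<longleftrightarrow> (\<forall>i j i' j'. (i, j) \<in> D \<longrightarrow> i' \<le> i \<longrightarrow> j' \<le> j \<longrightarrow> (i', j') \<in> D)"

definition SYT_cells :: "(nat \<times> nat) set \<Rightarrow> ((nat \<times> nat) \<Rightarrow> nat) set" where
  "SYT_cells D = {T \<in> D \<rightarrow>\<^sub>E {1..card D}.
      bij_betw T D {1..card D} \<and>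
      (\<forall>i j. (i, j + 1) \<in> D \<longrightarrow> T (i, j) < T (i, j + 1)) \<and>
      (\<forall>i j. (i + 1, j) \<in> D \<longrightarrow> T (i, j) < T (i + 1, j))}"

definition num_SYT_cells :: "(nat \<times> nat) set \<Rightarrow> nat" where
  "num_SYT_cells D = card (SYT_cells D)"

definition corners :: "(nat \<times> nat) set \<Rightarrow> (nat \<times> nat) set" where
  "corners D = {c \<in> D. down_closed (D - {c})}"

definition outer_corners :: "(nat \<times> nat) set \<Rightarrow> (nat \<times> nat) set" where
  "outer_corners D = {a. a \<notin> D \<and> down_closed (insert a D)}"

lemma down_closedD:
  "down_closed D \<Longrightarrow> (i, j) \<in> D \<Longrightarrow> i' \<le> i \<Longrightarrow> j' \<le> j \<Longrightarrow> (i', j') \<in> D"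
  unfolding down_closed_def by blast

lemma SYT_cellsD:
  assumes "T \<in> SYT_cells D"
  shows "T \<in> D \<rightarrow>\<^sub>E {1..card D}" "bij_betw T D {1..card D}"
    "(i, j + 1) \<in> D \<Longrightarrow> T (i, j) < T (i, j + 1)"
    "(i + 1, j) \<in> D \<Longrightarrow> T (i, j) < T (i + 1, j)"
  using assms unfolding SYT_cells_def by auto

lemma finite_SYT_cells: "finite D \<Longrightarrow> finite (SYT_cells D)"
  by (rule finite_subset[of _ "D \<rightarrow>\<^sub>E {1..card D}"]) (auto simp: SYT_cells_def finite_PiE)

lemma num_SYT_cells_empty: "num_SYT_cells {} = 1"
proof -
  have "SYT_cells {} = {\<lambda>_. undefined}"
    unfolding SYT_cells_def by (auto simp: bij_betw_def)
  then show ?thesis unfolding num_SYT_cells_def by simp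
qed

lemma corner_iff:
  assumes "down_closed D"
  shows "(i, j) \<in> corners D \<longleftrightarrow> (i, j) \<in> D \<and> (i, j + 1) \<notin> D \<and> (i + 1, j) \<notin> D"
proof
  assume "(i, j) \<in> corners D"
  then have "(i, j) \<in> D" and dc: "down_closed (D - {(i, j)})" unfolding corners_def by auto
  moreover have "(i, j + 1) \<notin> D" "(i + 1, j) \<notin> D"
    using down_closedD[OF dc, of i "j + 1" i j] down_closedD[OF dc, of "i + 1" j i j] by auto
  ultimately show "(i, j) \<in> D \<and> (i, j + 1) \<notin> D \<and> (i + 1, j) \<notin> D" by blast
next
  assume cond: "(i, j) \<in> D \<and> (i, j + 1) \<notin> D \<and> (i + 1, j) \<notin> D"
  have "(a', b') \<in> D - {(i, j)}" if ab: "(a, b) \<in> D - {(i, j)}" "a' \<le> a" "b' \<le> b" for a b a' b'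
  proof -
    have "(a', b') \<noteq> (i, j)"
    proof
      assume "(a', b') = (i, j)"
      then have "i \<le> a" "j \<le> b" "i + 1 \<le> a \<or> j + 1 \<le> b" using ab by auto
      then show False
        using cond ab(1) down_closedD[OF assms, of a b "i + 1" j] down_closedD[OF assms, of a b i "j + 1"]
        by auto
    qed
    then show ?thesis using down_closedD[OF assms _ ab(2,3)] ab(1) by auto
  qed
  then show "(i, j) \<in> corners D" using cond unfolding corners_def down_closed_def by blast
qed

lemma outer_corner_iff:
  assumes "down_closed D"
  shows "(i, j) \<in> outer_corners D \<longleftrightarrow>
           (i, j) \<notin> D \<and> (0 < i \<longrightarrow> (i - 1, j) \<in> D) \<and> (0 < j \<longrightarrow> (i, j - 1) \<in> D)"
proof
  assume "(i, j) \<in> outer_corners D"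
  then have "(i, j) \<notin> D" and dc: "down_closed (insert (i, j) D)" unfolding outer_corners_def by auto
  then show "(i, j) \<notin> D \<and> (0 < i \<longrightarrow> (i - 1, j) \<in> D) \<and> (0 < j \<longrightarrow> (i, j - 1) \<in> D)"
    using down_closedD[OF dc, of i j "i - 1" j] down_closedD[OF dc, of i j i "j - 1"] by auto
next
  assume cond: "(i, j) \<notin> D \<and> (0 < i \<longrightarrow> (i - 1, j) \<in> D) \<and> (0 < j \<longrightarrow> (i, j - 1) \<in> D)"
  have "(a', b') \<in> insert (i, j) D" if ab: "(a, b) \<in> insert (i, j) D" "a' \<le> a" "b' \<le> b" for a b a' b'
  proof (cases "(a, b) \<in> D")
    case True
    then show ?thesis using down_closedD[OF assms True ab(2,3)] by auto
  next
    case False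
    then have "a = i" "b = j" using ab by auto
    then consider "a' = i" "b' = j" | "a' \<le> i - 1" "0 < i" "b' \<le> j" | "a' \<le> i" "b' \<le> j - 1" "0 < j"
      using ab by linarith
    then show ?thesis
    proof cases
      case 2
      then show ?thesis using cond down_closedD[OF assms, of "i - 1" j a' b'] by auto
    next
      case 3
      then show ?thesis using cond down_closedD[OF assms, of i "j - 1" a' b'] by auto
    qed simp
  qed
  then show "(i, j) \<in> outer_corners D" using cond unfolding outer_corners_def down_closed_def by blast
qed

lemma finite_corners: "finite D \<Longrightarrow> finite (corners D)"
  unfolding corners_def by auto

lemma outer_corners_subset: "outer_corners D \<subseteq> insert (0, 0) (apfst Suc ` D \<union> apsnd Suc ` D)"
proof
  fix a assume a: "a \<in> outer_corners D"
  obtain i j where a_eq: "a = (i, j)" by fastforce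
  have dc: "down_closed (insert a D)" and "a \<notin> D" using a unfolding outer_corners_def by auto
  then have "0 < i \<longrightarrow> (i - 1, j) \<in> D" "0 < j \<longrightarrow> (i, j - 1) \<in> D"
    using down_closedD[OF dc, of i j "i - 1" j] down_closedD[OF dc, of i j i "j - 1"] unfolding a_eq
    by auto
  then show "a \<in> insert (0, 0) (apfst Suc ` D \<union> apsnd Suc ` D)"
    using rev_image_eqI[of "(i - 1, j)" D a "apfst Suc"] rev_image_eqI[of "(i, j - 1)" D a "apsnd Suc"]
    unfolding a_eq by (cases "i = 0"; cases "j = 0") auto
qed

lemma finite_outer_corners: "finite D \<Longrightarrow> finite (outer_corners D)"
  by (rule finite_subset[OF outer_corners_subset]) auto

lemma outer_corner_in_corners_insert:
  "a \<in> outer_corners D \<Longrightarrow> down_closed D \<Longrightarrow> a \<in> corners (insert a D)"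
  unfolding outer_corners_def corners_def by auto

lemma corner_in_outer_corners_remove:
  "c \<in> corners D \<Longrightarrow> down_closed D \<Longrightarrow> c \<in> outer_corners (D - {c})"
  unfolding outer_corners_def corners_def by (auto simp: insert_absorb)

lemma outer_corner_corner_swap:
  assumes dc: "down_closed D" and "a \<noteq> c"
  shows "a \<in> outer_corners D \<and> c \<in> corners (insert a D) \<longleftrightarrow>
         c \<in> corners D \<and> a \<in> outer_corners (D - {c})"
proof -
  have eq: "insert a D - {c} = insert a (D - {c})" using \<open>a \<noteq> c\<close> by auto
  show ?thesis
  proof
    assume "a \<in> outer_corners D \<and> c \<in> corners (insert a D)"
    then have "a \<notin> D" "c \<in> D" and dc': "down_closed (insert a (D - {c}))"
      using \<open>a \<noteq> c\<close> eq unfolding outer_corners_def corners_def by auto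
    moreover have "down_closed (D - {c})"
      unfolding down_closed_def
    proof (intro allI impI)
      fix i j i' j' assume "(i, j) \<in> D - {c}" "i' \<le> i" "j' \<le> j"
      then show "(i', j') \<in> D - {c}"
        using down_closedD[OF dc', of i j i' j'] down_closedD[OF dc, of i j i' j'] \<open>a \<notin> D\<close> by auto
    qed
    ultimately show "c \<in> corners D \<and> a \<in> outer_corners (D - {c})"
      unfolding corners_def outer_corners_def by auto
  next
    assume "c \<in> corners D \<and> a \<in> outer_corners (D - {c})"
    then have "c \<in> D" "a \<notin> D" and dc': "down_closed (insert a (D - {c}))"
      using \<open>a \<noteq> c\<close> unfolding outer_corners_def corners_def by auto
    moreover have "down_closed (insert a D)"
      unfolding down_closed_def
    proof (intro allI impI)
      fix i j i' j' assume "(i, j) \<in> insert a D" "i' \<le> i" "j' \<le> j"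
      then show "(i', j') \<in> insert a D"
        using down_closedD[OF dc', of i j i' j'] down_closedD[OF dc, of i j i' j'] by auto
    qed
    ultimately show "a \<in> outer_corners D \<and> c \<in> corners (insert a D)"
      using eq unfolding corners_def outer_corners_def by auto
  qed
qed

lemma SYT_cells_le_card: "T \<in> SYT_cells D \<Longrightarrow> x \<in> D \<Longrightarrow> T x \<le> card D"
  using SYT_cellsD(1) by fastforce

lemma SYT_cells_max_in_corners:
  assumes T: "T \<in> SYT_cells D" and dc: "down_closed D" and c: "c \<in> D" "T c = card D"
  shows "c \<in> corners D"
proof -
  obtain i j where c_eq: "c = (i, j)" by fastforce
  have "(i, j + 1) \<notin> D" "(i + 1, j) \<notin> D"
    using SYT_cellsD(3,4)[OF T, of i j] SYT_cells_le_card[OF T] c unfolding c_eq by fastforce+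
  then show ?thesis using c corner_iff[OF dc] unfolding c_eq by blast
qed

lemma SYT_cells_restrict:
  assumes T: "T \<in> SYT_cells D" and dc: "down_closed D" and "finite D"
    and c: "c \<in> D" "T c = card D"
  shows "restrict T (D - {c}) \<in> SYT_cells (D - {c})"
proof -
  have inj: "inj_on T D" and im: "T ` D = {1..card D}"
    using SYT_cellsD(2)[OF T] by (auto simp: bij_betw_def)
  have card: "card (D - {c}) = card D - 1" using c \<open>finite D\<close> by simp
  have im': "T ` (D - {c}) = {1..card D - 1}"
    using c im by (auto simp: inj_on_image_set_diff[OF inj])
  have bij: "bij_betw (restrict T (D - {c})) (D - {c}) {1..card D - 1}"
    unfolding bij_betw_def using im' inj_on_subset[OF inj] by (auto simp: inj_on_def)
  have below: "x \<noteq> c" if "x \<in> D" "T x < T y" "y \<in> D" for x y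
    using that c SYT_cells_le_card[OF T] by fastforce
  have "restrict T (D - {c}) (i, j) < restrict T (D - {c}) (i, j + 1)"
    if "(i, j + 1) \<in> D - {c}" for i j
    using that below[of "(i, j)" "(i, j + 1)"] SYT_cellsD(3)[OF T, of i j]
      down_closedD[OF dc, of i "j + 1" i j] by auto
  moreover have "restrict T (D - {c}) (i, j) < restrict T (D - {c}) (i + 1, j)"
    if "(i + 1, j) \<in> D - {c}" for i j
    using that below[of "(i, j)" "(i + 1, j)"] SYT_cellsD(4)[OF T, of i j]
      down_closedD[OF dc, of "i + 1" j i j] by auto
  moreover have "restrict T (D - {c}) \<in> (D - {c}) \<rightarrow>\<^sub>E {1..card D - 1}"
    using im' by auto
  ultimately show ?thesis unfolding SYT_cells_def card using bij by blast
qed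

lemma SYT_cells_extend:
  assumes c: "c \<in> corners D" and dc: "down_closed D" and "finite D"
    and T: "T \<in> SYT_cells (D - {c})"
  shows "T(c := card D) \<in> SYT_cells D"
proof -
  obtain i0 j0 where c_eq: "c = (i0, j0)" by fastforce
  have "c \<in> D" and not_below: "(i0, j0 + 1) \<notin> D" "(i0 + 1, j0) \<notin> D"
    using c corner_iff[OF dc] unfolding c_eq by auto
  have card: "card (D - {c}) = card D - 1" and pos: "0 < card D"
    using \<open>c \<in> D\<close> \<open>finite D\<close> by (auto simp: card_gt_0_iff)
  have bijT: "bij_betw T (D - {c}) {1..card D - 1}" using SYT_cellsD(2)[OF T] card by simp
  have small: "T x < card D" if "x \<in> D - {c}" for x
    using SYT_cells_le_card[OF T that] card pos by linarith
  let ?T = "T(c := card D)"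
  have "bij_betw ?T (D - {c}) {1..card D - 1}"
    using bijT by (rule bij_betw_cong[THEN iffD2, rotated]) simp
  then have "bij_betw ?T ((D - {c}) \<union> {c}) ({1..card D - 1} \<union> {?T c})"
    by (rule notIn_Un_bij_betw[rotated 2]) auto
  also have "(D - {c}) \<union> {c} = D" using \<open>c \<in> D\<close> by auto
  also have "{1..card D - 1} \<union> {?T c} = {1..card D}" using pos by auto
  finally have bij: "bij_betw ?T D {1..card D}" .
  have "?T \<in> extensional D"
    using SYT_cellsD(1)[OF T] \<open>c \<in> D\<close> by (auto simp: PiE_def extensional_def)
  then have "?T \<in> D \<rightarrow>\<^sub>E {1..card D}"
    using bij_betw_imp_funcset[OF bij] by (simp add: PiE_iff Pi_iff)
  moreover have "?T (i, j) < ?T (i, j + 1)" if "(i, j + 1) \<in> D" for i j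
    using that small[of "(i, j)"] SYT_cellsD(3)[OF T, of i j] not_below
      down_closedD[OF dc, of i "j + 1" i j] unfolding c_eq by auto
  moreover have "?T (i, j) < ?T (i + 1, j)" if "(i + 1, j) \<in> D" for i j
    using that small[of "(i, j)"] SYT_cellsD(4)[OF T, of i j] not_below
      down_closedD[OF dc, of "i + 1" j i j] unfolding c_eq by auto
  ultimately show ?thesis unfolding SYT_cells_def using bij by blast
qed

lemma card_SYT_cells_max_at:
  assumes c: "c \<in> corners D" and dc: "down_closed D" and "finite D"
  shows "card {T \<in> SYT_cells D. T c = card D} = num_SYT_cells (D - {c})"
  unfolding num_SYT_cells_def
proof (rule bij_betw_same_card[OF bij_betw_byWitness[where f' = "\<lambda>T. T(c := card D)"]])
  have "c \<in> D" using c unfolding corners_def by auto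
  show "\<forall>T\<in>{T \<in> SYT_cells D. T c = card D}. (restrict T (D - {c}))(c := card D) = T"
  proof
    fix T assume T: "T \<in> {T \<in> SYT_cells D. T c = card D}"
    then have "T \<in> extensional D" using SYT_cellsD(1) by (auto simp: PiE_def)
    then show "(restrict T (D - {c}))(c := card D) = T"
      using T \<open>c \<in> D\<close> by (auto simp: extensional_def fun_eq_iff)
  qed
  show "\<forall>T\<in>SYT_cells (D - {c}). restrict (T(c := card D)) (D - {c}) = T"
  proof
    fix T assume "T \<in> SYT_cells (D - {c})"
    then have "T \<in> extensional (D - {c})" using SYT_cellsD(1) by (auto simp: PiE_def)
    then show "restrict (T(c := card D)) (D - {c}) = T"
      by (auto simp: extensional_def fun_eq_iff)
  qed
  show "(\<lambda>T. restrict T (D - {c})) ` {T \<in> SYT_cells D. T c = card D} \<subseteq> SYT_cells (D - {c})"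
    using SYT_cells_restrict[OF _ dc \<open>finite D\<close> \<open>c \<in> D\<close>] by auto
  show "(\<lambda>T. T(c := card D)) ` SYT_cells (D - {c}) \<subseteq> {T \<in> SYT_cells D. T c = card D}"
    using SYT_cells_extend[OF c dc \<open>finite D\<close>] by auto
qed

text \<open>Classify the tableaux by the cell holding the largest entry \<open>card D\<close>, which must be
  a corner.\<close>

lemma num_SYT_cells_eq_sum_corners:
  assumes dc: "down_closed D" and "finite D" and "D \<noteq> {}"
  shows "num_SYT_cells D = (\<Sum>c\<in>corners D. num_SYT_cells (D - {c}))"
proof -
  have SYT_split: "SYT_cells D = (\<Union>c\<in>corners D. {T \<in> SYT_cells D. T c = card D})"
  proof (intro equalityI subsetI)
    fix T assume T: "T \<in> SYT_cells D"
    have "card D \<in> T ` D"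
      using SYT_cellsD(2)[OF T] assms by (auto simp: bij_betw_def card_gt_0_iff Suc_le_eq)
    then obtain c where "c \<in> D" "T c = card D" by auto
    then show "T \<in> (\<Union>c\<in>corners D. {T \<in> SYT_cells D. T c = card D})"
      using T SYT_cells_max_in_corners[OF T dc] by blast
  qed auto
  have disjoint: "{T \<in> SYT_cells D. T c = card D} \<inter> {T \<in> SYT_cells D. T c' = card D} = {}"
    if "c \<in> corners D" "c' \<in> corners D" "c \<noteq> c'" for c c'
  proof -
    have "c \<in> D" "c' \<in> D" using that unfolding corners_def by auto
    have "T c = card D \<Longrightarrow> T c' \<noteq> card D" if "T \<in> SYT_cells D" for T
      using SYT_cellsD(2)[OF that] inj_onD[of T D c c'] \<open>c \<in> D\<close> \<open>c' \<in> D\<close> \<open>c \<noteq> c'\<close>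
      unfolding bij_betw_def by auto
    then show ?thesis by auto
  qed
  have "num_SYT_cells D = card (\<Union>c\<in>corners D. {T \<in> SYT_cells D. T c = card D})"
    unfolding num_SYT_cells_def by (rule arg_cong[OF SYT_split])
  also have "\<dots> = (\<Sum>c\<in>corners D. card {T \<in> SYT_cells D. T c = card D})"
    by (rule card_UN_disjoint) (simp_all add: finite_corners finite_SYT_cells \<open>finite D\<close> disjoint)
  also have "\<dots> = (\<Sum>c\<in>corners D. num_SYT_cells (D - {c}))"
    using card_SYT_cells_max_at[OF _ dc \<open>finite D\<close>] by simp
  finally show ?thesis .
qed

definition row_len :: "(nat \<times> nat) set \<Rightarrow> nat \<Rightarrow> nat" where
  "row_len D i = card {j. (i, j) \<in> D}"

lemma down_closed_nat_eq_lessThan: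
  assumes "finite S" and "\<And>x y. x \<in> S \<Longrightarrow> y \<le> x \<Longrightarrow> y \<in> S"
  shows "S = {..<card S}"
proof -
  have "x < card S" if "x \<in> S" for x
  proof -
    have "card {..x} \<le> card S" using assms that by (intro card_mono) auto
    then show ?thesis by simp
  qed
  then show ?thesis using assms(1) by (intro card_subset_eq) auto
qed

lemma finite_row: "finite D \<Longrightarrow> finite {j. (i, j) \<in> D}"
  using finite_vimageI[of D "Pair i"] by (simp add: vimage_def inj_on_def)

lemma mem_iff_less_row_len:
  assumes "finite D" and dc: "down_closed D"
  shows "(i, j) \<in> D \<longleftrightarrow> j < row_len D i"
proof -
  have "{j. (i, j) \<in> D} = {..<row_len D i}"
    unfolding row_len_def
    by (rule down_closed_nat_eq_lessThan[OF finite_row[OF \<open>finite D\<close>]])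
      (use down_closedD[OF dc] in auto)
  then show ?thesis by blast
qed

lemma row_len_antimono:
  assumes "finite D" and "down_closed D" and "i \<le> i'"
  shows "row_len D i' \<le> row_len D i"
proof (rule ccontr)
  assume "\<not> row_len D i' \<le> row_len D i"
  then have "(i', row_len D i) \<in> D" using mem_iff_less_row_len[OF assms(1,2)] by simp
  then have "(i, row_len D i) \<in> D" using down_closedD[OF assms(2) _ assms(3) order_refl] by blast
  then show False using mem_iff_less_row_len[OF assms(1,2)] by simp
qed

lemma corners_eq_row_ends:
  assumes "finite D" and "down_closed D"
  shows "corners D = (\<lambda>i. (i, row_len D i - 1)) ` {i. row_len D (Suc i) < row_len D i}"
proof (intro equalityI subsetI)
  fix c assume c: "c \<in> corners D"
  obtain i j where c_eq: "c = (i, j)" by fastforce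
  have "j < row_len D i" "\<not> j + 1 < row_len D i" "\<not> j < row_len D (i + 1)"
    using c corner_iff[OF assms(2)] mem_iff_less_row_len[OF assms] unfolding c_eq by auto
  then show "c \<in> (\<lambda>i. (i, row_len D i - 1)) ` {i. row_len D (Suc i) < row_len D i}"
    unfolding c_eq by (auto intro!: image_eqI[of _ _ i])
next
  fix c assume "c \<in> (\<lambda>i. (i, row_len D i - 1)) ` {i. row_len D (Suc i) < row_len D i}"
  then obtain i where "c = (i, row_len D i - 1)" "row_len D (Suc i) < row_len D i" by auto
  then show "c \<in> corners D"
    using corner_iff[OF assms(2)] mem_iff_less_row_len[OF assms] by auto
qed

lemma outer_corners_eq_row_ends:
  assumes "finite D" and "down_closed D"
  shows "outer_corners D = (\<lambda>i. (i, row_len D i)) ` {i. i = 0 \<or> row_len D i < row_len D (i - 1)}"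
proof (intro equalityI subsetI)
  fix a assume a: "a \<in> outer_corners D"
  obtain i j where a_eq: "a = (i, j)" by fastforce
  have "\<not> j < row_len D i" "0 < i \<longrightarrow> j < row_len D (i - 1)" "0 < j \<longrightarrow> j - 1 < row_len D i"
    using a outer_corner_iff[OF assms(2)] mem_iff_less_row_len[OF assms] unfolding a_eq by auto
  then have "j = row_len D i" "i = 0 \<or> row_len D i < row_len D (i - 1)" by auto
  then show "a \<in> (\<lambda>i. (i, row_len D i)) ` {i. i = 0 \<or> row_len D i < row_len D (i - 1)}"
    unfolding a_eq by auto
next
  fix a assume "a \<in> (\<lambda>i. (i, row_len D i)) ` {i. i = 0 \<or> row_len D i < row_len D (i - 1)}"
  then obtain i where "a = (i, row_len D i)" "i = 0 \<or> row_len D i < row_len D (i - 1)" by auto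
  then show "a \<in> outer_corners D"
    using outer_corner_iff[OF assms(2)] mem_iff_less_row_len[OF assms] by auto
qed

lemma card_outer_corners:
  assumes "finite D" and "down_closed D"
  shows "card (outer_corners D) = card (corners D) + 1"
proof -
  let ?K = "{i. row_len D (Suc i) < row_len D i}"
  have "?K \<subseteq> fst ` D"
  proof
    fix i assume "i \<in> ?K"
    then have "(i, 0) \<in> D" using mem_iff_less_row_len[OF assms] by auto
    then show "i \<in> fst ` D" by (rule rev_image_eqI) simp
  qed
  then have "finite ?K" using assms(1) finite_subset by blast
  have "{i. i = 0 \<or> row_len D i < row_len D (i - 1)} = insert 0 (Suc ` ?K)"
  proof (intro equalityI subsetI)
    fix i assume "i \<in> {i. i = 0 \<or> row_len D i < row_len D (i - 1)}"
    then show "i \<in> insert 0 (Suc ` ?K)" by (cases i) auto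
  qed auto
  then have "card (outer_corners D) = card (insert 0 (Suc ` ?K))"
    unfolding outer_corners_eq_row_ends[OF assms] by (subst card_image) (auto simp: inj_on_def)
  also have "\<dots> = card ?K + 1"
    using \<open>finite ?K\<close> by (simp add: card_image)
  also have "card ?K = card (corners D)"
    unfolding corners_eq_row_ends[OF assms] by (subst card_image) (auto simp: inj_on_def)
  finally show ?thesis .
qed

subsection \<open>The up-down identity and the sum of squares\<close>

lemma sum_outer_corners_corners_swap:
  assumes "finite D" and dc: "down_closed D"
  shows "(\<Sum>a\<in>outer_corners D. \<Sum>c\<in>corners (insert a D) - {a}. h a c) =
         (\<Sum>c\<in>corners D. \<Sum>a\<in>outer_corners (D - {c}) - {c}. h a c)"
proof -
  let ?S = "Sigma (outer_corners D) (\<lambda>a. corners (insert a D) - {a})"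
  let ?S' = "Sigma (corners D) (\<lambda>c. outer_corners (D - {c}) - {c})"
  have "?S' = prod.swap ` ?S"
  proof (intro equalityI subsetI)
    fix x assume x: "x \<in> ?S'"
    obtain c a where x_eq: "x = (c, a)" by (cases x) blast
    have "(a, c) \<in> ?S" using x outer_corner_corner_swap[OF dc, of a c] unfolding x_eq by auto
    then show "x \<in> prod.swap ` ?S" unfolding x_eq by (rule rev_image_eqI) simp
  next
    fix x assume "x \<in> prod.swap ` ?S"
    then obtain y where y: "y \<in> ?S" "x = prod.swap y" by blast
    obtain a c where y_eq: "y = (a, c)" by (cases y) blast
    show "x \<in> ?S'" using y outer_corner_corner_swap[OF dc, of a c] unfolding y_eq by auto
  qed
  then have "(\<Sum>(c, a)\<in>?S'. h a c) = (\<Sum>(a, c)\<in>?S. h a c)"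
    by (simp add: sum.reindex case_prod_beta')
  moreover have "(\<Sum>a\<in>outer_corners D. \<Sum>c\<in>corners (insert a D) - {a}. h a c) = (\<Sum>(a, c)\<in>?S. h a c)"
    by (rule sum.Sigma) (simp_all add: finite_outer_corners finite_corners \<open>finite D\<close>)
  moreover have "(\<Sum>c\<in>corners D. \<Sum>a\<in>outer_corners (D - {c}) - {c}. h a c) = (\<Sum>(c, a)\<in>?S'. h a c)"
    by (rule sum.Sigma) (simp_all add: finite_outer_corners finite_corners \<open>finite D\<close>)
  ultimately show ?thesis by simp
qed

text \<open>Induction on \<open>card D\<close>: adding \<open>a\<close> and removing \<open>c \<noteq> a\<close> commute, and
  \<open>D\<close> has one more outer corner than corners. In terms of the up and down operators of
  Young's lattice this is \<open>DU - UD = id\<close>.\<close>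

lemma sum_num_SYT_cells_insert:
  assumes "finite D" and "down_closed D"
  shows "(\<Sum>a\<in>outer_corners D. num_SYT_cells (insert a D)) = (card D + 1) * num_SYT_cells D"
  using assms
proof (induction "card D" arbitrary: D rule: less_induct)
  case less
  note fin = \<open>finite D\<close> and dc = \<open>down_closed D\<close>
  let ?F = num_SYT_cells
  define P where "P = (\<Sum>a\<in>outer_corners D. \<Sum>c\<in>corners (insert a D) - {a}. ?F (insert a D - {c}))"
  have "?F (insert a D) = ?F D + (\<Sum>c\<in>corners (insert a D) - {a}. ?F (insert a D - {c}))"
    if a: "a \<in> outer_corners D" for a
  proof -
    have "a \<notin> D" "down_closed (insert a D)" using a unfolding outer_corners_def by auto
    then have "?F (insert a D) = (\<Sum>c\<in>corners (insert a D). ?F (insert a D - {c}))"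
      using num_SYT_cells_eq_sum_corners fin by simp
    also have "\<dots> = ?F (insert a D - {a}) + (\<Sum>c\<in>corners (insert a D) - {a}. ?F (insert a D - {c}))"
      using outer_corner_in_corners_insert[OF a dc] fin by (simp add: sum.remove finite_corners)
    finally show ?thesis using \<open>a \<notin> D\<close> by simp
  qed
  then have up: "(\<Sum>a\<in>outer_corners D. ?F (insert a D)) = card (outer_corners D) * ?F D + P"
    unfolding P_def by (simp add: sum.distrib)
  have remove_corner:
    "(\<Sum>a\<in>outer_corners (D - {c}) - {c}. ?F (insert a D - {c})) + ?F D = card D * ?F (D - {c})"
    if c: "c \<in> corners D" for c
  proof -
    have "c \<in> D" and dc': "down_closed (D - {c})" using c unfolding corners_def by auto
    moreover have "0 < card D" using fin \<open>c \<in> D\<close> card_gt_0_iff by blast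
    ultimately have card: "card (D - {c}) + 1 = card D" "card (D - {c}) < card D"
      using fin by simp_all
    have "(\<Sum>a\<in>outer_corners (D - {c}). ?F (insert a (D - {c}))) = (card (D - {c}) + 1) * ?F (D - {c})"
      using less.hyps[OF card(2) _ dc'] fin by simp
    then have "card D * ?F (D - {c}) = (\<Sum>a\<in>outer_corners (D - {c}). ?F (insert a (D - {c})))"
      by (simp only: card(1))
    also have "\<dots> = ?F (insert c (D - {c})) + (\<Sum>a\<in>outer_corners (D - {c}) - {c}. ?F (insert a (D - {c})))"
      using corner_in_outer_corners_remove[OF c dc] fin dc'
      by (simp add: sum.remove finite_outer_corners)
    also have "insert c (D - {c}) = D" using \<open>c \<in> D\<close> by auto
    also have "(\<Sum>a\<in>outer_corners (D - {c}) - {c}. ?F (insert a (D - {c}))) =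
               (\<Sum>a\<in>outer_corners (D - {c}) - {c}. ?F (insert a D - {c}))"
      by (rule sum.cong) (auto simp: insert_Diff_if)
    finally show ?thesis by simp
  qed
  have "P + card (corners D) * ?F D =
        (\<Sum>c\<in>corners D. (\<Sum>a\<in>outer_corners (D - {c}) - {c}. ?F (insert a D - {c})) + ?F D)"
    unfolding P_def sum_outer_corners_corners_swap[OF fin dc] by (simp add: sum.distrib)
  also have "\<dots> = (\<Sum>c\<in>corners D. card D * ?F (D - {c}))"
    using remove_corner by simp
  also have "\<dots> = card D * ?F D"
    using num_SYT_cells_eq_sum_corners[OF dc fin]
    by (cases "D = {}") (simp_all add: corners_def sum_distrib_left)
  finally show ?case using up card_outer_corners[OF fin dc] by (simp add: algebra_simps)
qed

definition diagrams :: "nat \<Rightarrow> (nat \<times> nat) set set" where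
  "diagrams n = {D. finite D \<and> down_closed D \<and> card D = n}"

lemma diagrams_subset: "diagrams n \<subseteq> Pow ({..<n} \<times> {..<n})"
proof (intro subsetI PowI)
  fix D x assume D: "D \<in> diagrams n" and x: "x \<in> D"
  obtain i j where x_eq: "x = (i, j)" by fastforce
  have fin: "finite D" and dc: "down_closed D" and card: "card D = n"
    using D unfolding diagrams_def by auto
  have "(\<lambda>k. (k, j)) ` {..i} \<subseteq> D" "(\<lambda>k. (i, k)) ` {..j} \<subseteq> D"
    using down_closedD[OF dc x[unfolded x_eq]] by auto
  then have "card ((\<lambda>k. (k, j)) ` {..i}) \<le> n" "card ((\<lambda>k. (i, k)) ` {..j}) \<le> n"
    using card_mono[OF fin] card by blast+
  then show "x \<in> {..<n} \<times> {..<n}"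
    unfolding x_eq by (simp add: card_image inj_on_def)
qed

lemma finite_diagrams: "finite (diagrams n)"
  by (rule finite_subset[OF diagrams_subset]) simp

lemma diagrams_0: "diagrams 0 = {{}}"
  unfolding diagrams_def down_closed_def by auto

lemma sum_square_num_SYT_cells_Suc:
  "(\<Sum>E\<in>diagrams (Suc n). num_SYT_cells E ^ 2) = Suc n * (\<Sum>D\<in>diagrams n. num_SYT_cells D ^ 2)"
proof -
  let ?F = num_SYT_cells
  have "(\<Sum>E\<in>diagrams (Suc n). ?F E ^ 2) = (\<Sum>E\<in>diagrams (Suc n). \<Sum>c\<in>corners E. ?F E * ?F (E - {c}))"
  proof (rule sum.cong[OF refl])
    fix E assume "E \<in> diagrams (Suc n)"
    then have "down_closed E" "finite E" "E \<noteq> {}" unfolding diagrams_def by auto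
    then show "?F E ^ 2 = (\<Sum>c\<in>corners E. ?F E * ?F (E - {c}))"
      using num_SYT_cells_eq_sum_corners by (simp add: power2_eq_square sum_distrib_left)
  qed
  also have "\<dots> = (\<Sum>(E, c)\<in>Sigma (diagrams (Suc n)) corners. ?F E * ?F (E - {c}))"
    by (rule sum.Sigma) (use finite_diagrams in \<open>auto simp: diagrams_def finite_corners\<close>)
  also have "\<dots> = (\<Sum>(D, a)\<in>Sigma (diagrams n) outer_corners. ?F (insert a D) * ?F D)"
  proof (rule sum.reindex_bij_witness[where i = "\<lambda>(D, a). (insert a D, a)" and j = "\<lambda>(E, c). (E - {c}, c)"])
    fix x assume "x \<in> Sigma (diagrams (Suc n)) corners"
    moreover obtain E c where x_eq: "x = (E, c)" by (cases x) blast
    ultimately have "E \<in> diagrams (Suc n)" "c \<in> corners E" by auto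
    then show "(\<lambda>(D, a). (insert a D, a)) ((\<lambda>(E, c). (E - {c}, c)) x) = x"
      and "(\<lambda>(E, c). (E - {c}, c)) x \<in> Sigma (diagrams n) outer_corners"
      and "(\<lambda>(D, a). ?F (insert a D) * ?F D) ((\<lambda>(E, c). (E - {c}, c)) x) = (\<lambda>(E, c). ?F E * ?F (E - {c})) x"
      using corner_in_outer_corners_remove
      unfolding x_eq diagrams_def corners_def by (auto simp: insert_absorb)
  next
    fix x assume "x \<in> Sigma (diagrams n) outer_corners"
    moreover obtain D a where x_eq: "x = (D, a)" by (cases x) blast
    ultimately have "D \<in> diagrams n" "a \<in> outer_corners D" by auto
    then show "(\<lambda>(E, c). (E - {c}, c)) ((\<lambda>(D, a). (insert a D, a)) x) = x"
      and "(\<lambda>(D, a). (insert a D, a)) x \<in> Sigma (diagrams (Suc n)) corners"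
      using outer_corner_in_corners_insert
      unfolding x_eq diagrams_def outer_corners_def by auto
  qed
  also have "\<dots> = (\<Sum>D\<in>diagrams n. \<Sum>a\<in>outer_corners D. ?F (insert a D) * ?F D)"
    by (rule sum.Sigma[symmetric]) (use finite_diagrams in \<open>auto simp: diagrams_def finite_outer_corners\<close>)
  also have "\<dots> = (\<Sum>D\<in>diagrams n. Suc n * ?F D ^ 2)"
  proof (rule sum.cong[OF refl])
    fix D assume "D \<in> diagrams n"
    then have "finite D" "down_closed D" "card D = n" unfolding diagrams_def by auto
    have "(\<Sum>a\<in>outer_corners D. ?F (insert a D) * ?F D) = (\<Sum>a\<in>outer_corners D. ?F (insert a D)) * ?F D"
      by (simp add: sum_distrib_right)
    also have "\<dots> = Suc n * ?F D ^ 2"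
      using sum_num_SYT_cells_insert[OF \<open>finite D\<close> \<open>down_closed D\<close>] \<open>card D = n\<close>
      by (simp add: power2_eq_square algebra_simps)
    finally show "(\<Sum>a\<in>outer_corners D. ?F (insert a D) * ?F D) = Suc n * ?F D ^ 2" .
  qed
  finally show ?thesis by (simp add: sum_distrib_left)
qed

lemma sum_square_num_SYT_cells: "(\<Sum>D\<in>diagrams n. num_SYT_cells D ^ 2) = fact n"
  by (induction n) (simp_all add: diagrams_0 num_SYT_cells_empty sum_square_num_SYT_cells_Suc)

lemma cells_eq_Sigma: "cells lam = (SIGMA i:{..<length lam}. {..<lam ! i})"
  unfolding cells_def by auto

lemma finite_cells: "finite (cells lam)"
  unfolding cells_eq_Sigma by simp

lemma card_cells: "card (cells lam) = sum_list lam"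
  unfolding cells_eq_Sigma by (simp add: card_SigmaI sum_list_sum_nth atLeast0LessThan)

lemma num_SYT_eq_num_SYT_cells: "num_SYT lam = num_SYT_cells (cells lam)"
  unfolding num_SYT_def num_SYT_cells_def SYT_def SYT_cells_def card_cells ..

lemma down_closed_cells:
  assumes "is_partition lam"
  shows "down_closed (cells lam)"
  unfolding down_closed_def
proof (intro allI impI)
  fix i j i' j' assume ij: "(i, j) \<in> cells lam" and le: "i' \<le> i" "j' \<le> j"
  have "lam ! i \<le> lam ! i'"
  proof (cases "i' = i")
    case False
    then show ?thesis
      using assms ij le sorted_wrt_nth_less[of "(\<ge>)" lam i' i]
      unfolding is_partition_def cells_def by simp
  qed simp
  then show "(i', j') \<in> cells lam" using ij le unfolding cells_def by simp
qed

lemma cells_inject: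
  assumes "is_partition lam" "is_partition mu" and eq: "cells lam = cells mu"
  shows "lam = mu"
proof -
  have first_column: "(i, 0) \<in> cells nu \<longleftrightarrow> i < length nu" if "is_partition nu" for nu i
    using that unfolding is_partition_def cells_def by (auto simp: nth_mem)
  have "i < length lam \<longleftrightarrow> i < length mu" for i
    using first_column[OF assms(1)] first_column[OF assms(2)] eq by simp
  then have len: "length lam = length mu" by (metis less_irrefl nat_neq_iff)
  show ?thesis
  proof (rule nth_equalityI[OF len])
    fix i assume i: "i < length lam"
    have "(i, j) \<in> cells lam \<longleftrightarrow> (i, j) \<in> cells mu" for j using eq by simp
    then have "j < lam ! i \<longleftrightarrow> j < mu ! i" for j using i len unfolding cells_def by simp
    then show "lam ! i = mu ! i" by (metis less_irrefl nat_neq_iff)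
  qed
qed

lemma diagram_eq_cells:
  assumes "finite D" and dc: "down_closed D"
  obtains lam where "is_partition lam" "cells lam = D"
proof -
  define L where "L = card {i. (i, 0) \<in> D}"
  have "finite {i. (i, 0) \<in> D}"
    using finite_vimageI[OF \<open>finite D\<close>, of "\<lambda>i. (i, 0)"] by (simp add: vimage_def inj_on_def)
  then have "{i. (i, 0) \<in> D} = {..<L}"
    unfolding L_def by (rule down_closed_nat_eq_lessThan) (use down_closedD[OF dc] in auto)
  then have rows: "(i, 0) \<in> D \<longleftrightarrow> i < L" for i by blast
  define lam where "lam = map (row_len D) [0..<L]"
  have len: "length lam = L" and nth: "i < L \<Longrightarrow> lam ! i = row_len D i" for i
    unfolding lam_def by simp_all
  have "is_partition lam"
    unfolding is_partition_def
  proof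
    show "sorted_wrt (\<ge>) lam"
      by (rule sorted_wrt_iff_nth_less[THEN iffD2]) (auto simp: len nth row_len_antimono[OF assms])
    show "\<forall>p\<in>set lam. 0 < p"
      by (auto simp: lam_def rows[symmetric] mem_iff_less_row_len[OF assms, symmetric])
  qed
  moreover have "cells lam = D"
  proof (intro equalityI subsetI)
    fix x assume "x \<in> cells lam"
    then obtain i j where "x = (i, j)" "i < L" "j < row_len D i"
      unfolding cells_def len by (auto simp: nth)
    then show "x \<in> D" using mem_iff_less_row_len[OF assms] by simp
  next
    fix x assume x: "x \<in> D"
    obtain i j where x_eq: "x = (i, j)" by fastforce
    have "i < L" using rows down_closedD[OF dc, of i j i 0] x x_eq by auto
    moreover have "j < row_len D i" using x x_eq mem_iff_less_row_len[OF assms] by auto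
    ultimately show "x \<in> cells lam" unfolding cells_def x_eq using len nth by auto
  qed
  ultimately show ?thesis by (rule that)
qed

lemma bij_betw_cells_diagrams: "bij_betw cells (partitions_of n) (diagrams n)"
  unfolding bij_betw_def
proof
  show "inj_on cells (partitions_of n)"
    unfolding inj_on_def partitions_of_def using cells_inject by blast
  show "cells ` partitions_of n = diagrams n"
  proof (intro equalityI subsetI)
    fix D assume "D \<in> cells ` partitions_of n"
    then show "D \<in> diagrams n"
      unfolding diagrams_def partitions_of_def
      using finite_cells down_closed_cells card_cells by auto
  next
    fix D assume D: "D \<in> diagrams n"
    then obtain lam where "is_partition lam" "cells lam = D"
      using diagram_eq_cells unfolding diagrams_def by blast
    moreover have "sum_list lam = n" using D card_cells \<open>cells lam = D\<close> unfolding diagrams_def by auto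
    ultimately show "D \<in> cells ` partitions_of n" unfolding partitions_of_def by blast
  qed
qed

lemma sum_square_num_SYT: "(\<Sum>lam\<in>partitions_of n. num_SYT lam ^ 2) = fact n"
  using sum.reindex_bij_betw[OF bij_betw_cells_diagrams, of "\<lambda>D. num_SYT_cells D ^ 2"]
  by (simp add: num_SYT_eq_num_SYT_cells sum_square_num_SYT_cells)

lemma sum_plancherel: "(\<Sum>lam\<in>partitions_of n. plancherel n lam) = (1 :: 'a::field_char_0)"
proof -
  have "(\<Sum>lam\<in>partitions_of n. plancherel n lam) =
        (of_nat (\<Sum>lam\<in>partitions_of n. num_SYT lam ^ 2) :: 'a) / of_nat (fact n)"
    unfolding plancherel_def by (simp add: sum_divide_distrib)
  then show ?thesis by (simp add: sum_square_num_SYT)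
qed

lemma sum_pCons_0: "(\<Sum>x\<in>S. [:f x:]) = [:\<Sum>x\<in>S. f x:]"
  by (induction S rule: infinite_finite_induct) simp_all

lemma weighted_variance_shift:
  fixes w :: "'b \<Rightarrow> 'a::comm_ring_1"
  assumes "(\<Sum>x\<in>S. w x) = 1"
  shows "(\<Sum>x\<in>S. w x * (u + Q x)\<^sup>2) - (\<Sum>x\<in>S. w x * (u + Q x))\<^sup>2 =
         (\<Sum>x\<in>S. w x * (Q x)\<^sup>2) - (\<Sum>x\<in>S. w x * Q x)\<^sup>2"
proof -
  have "w x * (u + Q x)\<^sup>2 = u\<^sup>2 * w x + 2 * u * (w x * Q x) + w x * (Q x)\<^sup>2" for x
    by (simp add: power2_eq_square algebra_simps)
  then have "(\<Sum>x\<in>S. w x * (u + Q x)\<^sup>2) = u\<^sup>2 + 2 * u * (\<Sum>x\<in>S. w x * Q x) + (\<Sum>x\<in>S. w x * (Q x)\<^sup>2)"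
    using assms by (simp add: sum.distrib flip: sum_distrib_left)
  moreover have "(\<Sum>x\<in>S. w x * (u + Q x)) = u + (\<Sum>x\<in>S. w x * Q x)"
    using assms by (simp add: distrib_left sum.distrib mult.commute[of _ u] flip: sum_distrib_left)
  ultimately show ?thesis by (simp add: power2_eq_square algebra_simps)
qed

section \<open>Integer degree bounds\<close>

text \<open>The bound is an integer so that negative bounds, which force \<open>p = 0\<close>, are allowed.\<close>

definition deg_le :: "'a::zero poly \<Rightarrow> int \<Rightarrow> bool" where
  "deg_le p k \<longleftrightarrow> p = 0 \<or> int (degree p) \<le> k"

lemma deg_le_0 [simp]: "deg_le 0 k"
  by (simp add: deg_le_def)

lemma deg_le_mono: "deg_le p k \<Longrightarrow> k \<le> k' \<Longrightarrow> deg_le p k'"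
  unfolding deg_le_def by auto

lemma deg_le_add: "deg_le p k \<Longrightarrow> deg_le q k \<Longrightarrow> deg_le (p + q) k"
  unfolding deg_le_def using degree_add_le_max[of p q] by auto

lemma deg_le_diff:
  fixes p q :: "'a::ab_group_add poly"
  shows "deg_le p k \<Longrightarrow> deg_le q k \<Longrightarrow> deg_le (p - q) k"
  unfolding deg_le_def using degree_diff_le_max[of p q] by auto

lemma deg_le_mult:
  fixes p q :: "'a::comm_semiring_1 poly"
  shows "deg_le p k \<Longrightarrow> deg_le q l \<Longrightarrow> deg_le (p * q) (k + l)"
  unfolding deg_le_def using degree_mult_le[of p q] by auto

lemma deg_le_smult: "deg_le p k \<Longrightarrow> deg_le (smult c p) k"
  unfolding deg_le_def using degree_smult_le[of c p] by auto

lemma deg_le_sum: "(\<And>x. x \<in> S \<Longrightarrow> deg_le (f x) k) \<Longrightarrow> deg_le (\<Sum>x\<in>S. f x) k"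
  by (induction S rule: infinite_finite_induct) (auto intro: deg_le_add)

lemma deg_le_power:
  fixes p :: "'a::comm_semiring_1 poly"
  shows "deg_le p k \<Longrightarrow> deg_le (p ^ m) (int m * k)"
  by (induction m) (auto simp: deg_le_def[of 1] algebra_simps dest: deg_le_mult)

lemma deg_le_pderiv:
  fixes p :: "'a::{comm_semiring_1,semiring_no_zero_divisors,semiring_char_0} poly"
  shows "deg_le (pderiv p) (k - 1) \<longleftrightarrow> deg_le p k \<or> degree p = 0"
  unfolding deg_le_def by (cases "degree p = 0") (auto simp: pderiv_eq_0_iff degree_pderiv)

lemma deg_le_higher_pderiv:
  fixes p :: "'a::{comm_semiring_1,semiring_no_zero_divisors,semiring_char_0} poly"
  shows "deg_le p k \<Longrightarrow> deg_le ((pderiv ^^ i) p) (k - int i)"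
proof (induction i)
  case (Suc i)
  then have "deg_le (pderiv ((pderiv ^^ i) p)) (k - int i - 1)"
    using deg_le_pderiv by blast
  then show ?case by (simp add: algebra_simps)
qed simp

lemma deg_le_prod:
  fixes g :: "'b \<Rightarrow> 'a::comm_semiring_1 poly"
  shows "(\<And>i. i \<in> I \<Longrightarrow> deg_le (g i) (d i)) \<Longrightarrow> deg_le (prod g I) (sum d I)"
  by (induction I rule: infinite_finite_induct) (auto simp: deg_le_def[of 1] intro: deg_le_mult)

lemma deg_le_prod_diff:
  fixes f g :: "'b \<Rightarrow> 'a::comm_ring_1 poly"
  assumes "finite I" and "0 \<le> e"
    and g: "\<And>i. i \<in> I \<Longrightarrow> deg_le (g i) (d i)"
    and fg: "\<And>i. i \<in> I \<Longrightarrow> deg_le (f i - g i) (d i - e)"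
  shows "deg_le (prod f I - prod g I) (sum d I - e)"
  using assms(1) g fg
proof (induction I rule: finite_induct)
  case (insert x F)
  have IH: "deg_le (prod f F - prod g F) (sum d F - e)" using insert by blast
  have gx: "deg_le (g x) (d x)" and fgx: "deg_le (f x - g x) (d x - e)" using insert.prems by auto
  have "deg_le (prod f F - prod g F) (sum d F)"
    by (rule deg_le_mono[OF IH]) (use \<open>0 \<le> e\<close> in simp)
  then have "deg_le (prod g F + (prod f F - prod g F)) (sum d F)"
    using deg_le_prod[of F g d] insert.prems(1) by (blast intro: deg_le_add)
  then have "deg_le (prod f F) (sum d F)" by simp
  from deg_le_mult[OF fgx this] have "deg_le ((f x - g x) * prod f F) (d x + sum d F - e)"
    by (simp add: algebra_simps)
  moreover have "deg_le (g x * (prod f F - prod g F)) (d x + sum d F - e)"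
    using deg_le_mult[OF gx IH] by (simp add: algebra_simps)
  moreover have "prod f (insert x F) - prod g (insert x F) =
                 (f x - g x) * prod f F + g x * (prod f F - prod g F)"
    using insert.hyps by (simp add: algebra_simps)
  ultimately show ?case using insert.hyps deg_le_add by simp
qed simp

section \<open>Wronskians of powers of a linear polynomial\<close>

lemma higher_pderiv_diff:
  fixes p q :: "'a::idom poly"
  shows "(pderiv ^^ n) (p - q) = (pderiv ^^ n) p - (pderiv ^^ n) q"
  by (induction n) (simp_all add: pderiv_diff)

definition falling_fact :: "'a::comm_ring_1 \<Rightarrow> nat \<Rightarrow> 'a" where
  "falling_fact x i = (\<Prod>k<i. x - of_nat k)"

lemma falling_fact_0 [simp]: "falling_fact x 0 = 1"
  by (simp add: falling_fact_def)

lemma falling_fact_Suc: "falling_fact x (Suc i) = falling_fact x i * (x - of_nat i)"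
  by (simp add: falling_fact_def)

lemma falling_fact_of_nat_eq_0: "m < i \<Longrightarrow> falling_fact (of_nat m) i = 0"
  unfolding falling_fact_def by (rule prod_zero) auto

lemma higher_pderiv_linear_power:
  fixes a :: "'a::idom"
  shows "(pderiv ^^ i) ([:a, 1:] ^ m) = smult (falling_fact (of_nat m) i) ([:a, 1:] ^ (m - i))"
proof (induction i)
  case (Suc i)
  show ?case
  proof (cases "i < m")
    case True
    then obtain j where j: "m - i = Suc j" "m - Suc i = j" by (metis Suc_diff_Suc)
    have "of_nat (Suc j) = (of_nat m - of_nat i :: 'a)"
      using j True by (simp add: of_nat_diff[symmetric])
    moreover have "pderiv ([:a, 1:] ^ Suc j) = smult (of_nat (Suc j)) ([:a, 1:] ^ j)"
      using pderiv_power_Suc[of "[:a, 1:]" j] by (simp add: pderiv_pCons del: power_Suc)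
    ultimately show ?thesis
      using Suc.IH j by (simp add: pderiv_smult falling_fact_Suc mult.commute del: of_nat_Suc)
  next
    case False
    then have "falling_fact (of_nat m) (Suc i) = (0 :: 'a)"
      using falling_fact_of_nat_eq_0[of m i] by (cases "i = m") (auto simp: falling_fact_Suc)
    then show ?thesis using Suc.IH False by (simp add: pderiv_smult)
  qed
qed simp

lemma prod_smult_power:
  fixes q :: "'a::comm_ring_1 poly"
  shows "(\<Prod>i\<in>I. smult (c i) (q ^ e i)) = smult (\<Prod>i\<in>I. c i) (q ^ (\<Sum>i\<in>I. e i))"
  by (induction I rule: infinite_finite_induct) (simp_all add: power_add mult_ac)

lemma det_mat_scale_cols:
  fixes c :: "nat \<Rightarrow> 'a::comm_ring_1"
  shows "det (mat n n (\<lambda>(i, j). c j * f i j)) = (\<Prod>j<n. c j) * det (mat n n (\<lambda>(i, j). f i j))"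
proof -
  have "det (mat n n (\<lambda>(i, j). c j * f i j)) =
      (\<Sum>p\<in>{p. p permutes {0..<n}}. signof p * (\<Prod>i = 0..<n. c (p i) * f i (p i)))"
    by (subst det_def') auto
  also have "\<dots> = (\<Sum>p\<in>{p. p permutes {0..<n}}. (\<Prod>j<n. c j) * (signof p * (\<Prod>i = 0..<n. f i (p i))))"
  proof (rule sum.cong[OF refl])
    fix p assume "p \<in> {p. p permutes {0..<n}}"
    then have "(\<Prod>i = 0..<n. c (p i)) = (\<Prod>j<n. c j)"
      using prod.permute[of p "{0..<n}" c] by (simp add: comp_def atLeast0LessThan)
    then show "signof p * (\<Prod>i = 0..<n. c (p i) * f i (p i)) =
               (\<Prod>j<n. c j) * (signof p * (\<Prod>i = 0..<n. f i (p i)))"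
      by (simp add: prod.distrib algebra_simps)
  qed
  also have "\<dots> = (\<Prod>j<n. c j) * det (mat n n (\<lambda>(i, j). f i j))"
    by (subst det_def'[of _ n]) (auto simp: sum_distrib_left)
  finally show ?thesis .
qed

text \<open>Subtracting \<open>x\<^sub>0 - (i - 1)\<close> times row \<open>i - 1\<close> from row \<open>i\<close> turns the entries
  \<open>falling_fact x i\<close> into \<open>(x - x\<^sub>0) * falling_fact x (i - 1)\<close>, which clears the first column
  below the diagonal and lets the induction proceed on the remaining minor.\<close>

lemma det_falling_fact:
  fixes xs :: "'a::comm_ring_1 list"
  shows "det (mat (length xs) (length xs) (\<lambda>(i, j). falling_fact (xs ! j) i)) =
         (\<Prod>j<length xs. \<Prod>i<j. xs ! j - xs ! i)"
proof (induction xs)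
  case (Cons x0 xs)
  define n where "n = length xs"
  define ys where "ys = x0 # xs"
  define M where "M = mat (Suc n) (Suc n) (\<lambda>(i, j). falling_fact (ys ! j) i)"
  define L :: "'a mat" where "L = mat (Suc n) (Suc n)
      (\<lambda>(i, k). (if k = i then 1 else 0) - (if Suc k = i then x0 - of_nat k else 0))"
  define B where "B = mat (Suc n) (Suc n)
      (\<lambda>(i, j). if i = 0 then 1 else (ys ! j - x0) * falling_fact (ys ! j) (i - 1))"
  have M: "M \<in> carrier_mat (Suc n) (Suc n)" and L: "L \<in> carrier_mat (Suc n) (Suc n)"
    unfolding M_def L_def by auto
  have "det L = prod_list (diag_mat L)"
    by (rule det_lower_triangular[OF _ L]) (auto simp: L_def)
  also have "diag_mat L = map (\<lambda>i. 1) [0..<Suc n]"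
    unfolding diag_mat_def L_def by auto
  finally have "det L = 1" by (simp add: map_replicate_const)
  have "L * M = B"
  proof (rule eq_matI)
    fix i j assume "i < dim_row B" "j < dim_col B"
    then have i: "i < Suc n" and j: "j < Suc n" unfolding B_def by auto
    have "(L * M) $$ (i, j) = (\<Sum>k<Suc n. L $$ (i, k) * M $$ (k, j))"
      using i j L M by (simp add: scalar_prod_def atLeast0LessThan)
    also have "\<dots> = (\<Sum>k<Suc n. (if k = i then M $$ (k, j) else 0)) -
                     (\<Sum>k<Suc n. (if Suc k = i then (x0 - of_nat k) * M $$ (k, j) else 0))"
      unfolding sum_subtractf[symmetric] using i by (intro sum.cong) (auto simp: L_def algebra_simps)
    also have "\<dots> = M $$ (i, j) - (if i = 0 then 0 else (x0 - of_nat (i - 1)) * M $$ (i - 1, j))"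
    proof (cases i)
      case (Suc i0)
      have "(\<Sum>k<Suc n. (if Suc k = i then (x0 - of_nat k) * M $$ (k, j) else 0)) =
            (\<Sum>k<Suc n. (if k = i0 then (x0 - of_nat k) * M $$ (k, j) else 0))"
        using Suc by (intro sum.cong) auto
      then show ?thesis using Suc i by simp
    qed (use i in simp)
    also have "\<dots> = B $$ (i, j)"
      using i j unfolding M_def B_def by (cases i) (simp_all add: falling_fact_Suc algebra_simps)
    finally show "(L * M) $$ (i, j) = B $$ (i, j)" .
  qed (auto simp: L_def B_def M_def)
  then have "det M = det B"
    using det_mult[OF L M] \<open>det L = 1\<close> by simp
  also have "det B = (\<Sum>i<Suc n. B $$ (i, 0) * cofactor B i 0)"
    by (rule laplace_expansion_column) (auto simp: B_def)
  also have "\<dots> = B $$ (0, 0) * cofactor B 0 0 + (\<Sum>i<n. B $$ (Suc i, 0) * cofactor B (Suc i) 0)"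
    by (rule sum.lessThan_Suc_shift)
  also have "(\<Sum>i<n. B $$ (Suc i, 0) * cofactor B (Suc i) 0) = 0"
    by (rule sum.neutral) (auto simp: B_def ys_def)
  also have "B $$ (0, 0) * cofactor B 0 0 = det (mat_delete B 0 0)"
    by (simp add: B_def cofactor_def)
  also have "mat_delete B 0 0 = mat n n (\<lambda>(i, j). (xs ! j - x0) * falling_fact (xs ! j) i)"
    by (rule eq_matI) (auto simp: mat_delete_def B_def ys_def)
  also have "det \<dots> = (\<Prod>j<n. xs ! j - x0) * det (mat n n (\<lambda>(i, j). falling_fact (xs ! j) i))"
    by (rule det_mat_scale_cols)
  also have "det (mat n n (\<lambda>(i, j). falling_fact (xs ! j) i)) = (\<Prod>j<n. \<Prod>i<j. xs ! j - xs ! i)"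
    using Cons.IH unfolding n_def .
  also have "(\<Prod>j<n. xs ! j - x0) * (\<Prod>j<n. \<Prod>i<j. xs ! j - xs ! i) = (\<Prod>j<Suc n. \<Prod>i<j. ys ! j - ys ! i)"
  proof -
    have "(\<Prod>j<Suc n. \<Prod>i<j. ys ! j - ys ! i) = (\<Prod>j<n. \<Prod>i<Suc j. ys ! Suc j - ys ! i)"
      by (subst prod.lessThan_Suc_shift) simp
    also have "\<dots> = (\<Prod>j<n. (xs ! j - x0) * (\<Prod>i<j. xs ! j - xs ! i))"
      by (rule prod.cong[OF refl], subst prod.lessThan_Suc_shift) (simp add: ys_def)
    finally show ?thesis by (simp add: prod.distrib)
  qed
  finally show ?case unfolding M_def ys_def n_def by simp
qed simp

lemma wronskian_map_altdef:
  "wronskian (map f ns) =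
     (\<Sum>p | p permutes {0..<length ns}. signof p * (\<Prod>i = 0..<length ns. (pderiv ^^ i) (f (ns ! p i))))"
  unfolding wronskian_def by (subst det_def'[of _ "length ns"]) (auto intro!: sum.cong prod.cong)

lemma sum_permutes_nth_minus_index:
  assumes "p permutes {0..<length ns}"
  shows "(\<Sum>i = 0..<length ns. int (ns ! p i) - int i) = int (sum_list ns) - int (\<Sum>i<length ns. i)"
proof -
  have "(\<Sum>i = 0..<length ns. int (ns ! p i)) = (\<Sum>i = 0..<length ns. int (ns ! i))"
    using sum.permute[OF assms, of "\<lambda>i. int (ns ! i)"] by (simp add: comp_def)
  then show ?thesis
    by (simp add: sum_subtractf sum_list_sum_nth atLeast0LessThan flip: of_nat_sum)
qed

lemma wronskian_linear_powers:
  fixes a :: "'a::idom"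
  shows "wronskian (map (\<lambda>m. [:a, 1:] ^ m) ns) =
         smult (of_int (vandermonde ns)) ([:a, 1:] ^ (sum_list ns - (\<Sum>i<length ns. i)))"
proof -
  let ?y = "[:a, 1:]" and ?r = "length ns" and ?e = "sum_list ns - (\<Sum>i<length ns. i)"
  let ?c = "\<lambda>p. \<Prod>i = 0..<?r. falling_fact (of_nat (ns ! p i)) i :: 'a"
  have leibniz_term: "(\<Prod>i = 0..<?r. (pderiv ^^ i) (?y ^ (ns ! p i))) = smult (?c p) (?y ^ ?e)"
    if p: "p permutes {0..<?r}" for p
  proof -
    have "(\<Prod>i = 0..<?r. (pderiv ^^ i) (?y ^ (ns ! p i))) =
          smult (?c p) (?y ^ (\<Sum>i = 0..<?r. ns ! p i - i))"
      by (simp add: higher_pderiv_linear_power prod_smult_power)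
    also have "\<dots> = smult (?c p) (?y ^ ?e)"
    proof (cases "?c p = 0")
      case True
      then show ?thesis by (simp only: smult_0_left)
    next
      case False
      text \<open>A nonzero coefficient forces \<open>i \<le> ns ! p i\<close>, so no truncated subtraction occurs.\<close>
      then have "i \<le> ns ! p i" if "i < ?r" for i
        using that falling_fact_of_nat_eq_0[of "ns ! p i" i] by (force simp: prod_zero_iff)
      then have "int (\<Sum>i = 0..<?r. ns ! p i - i) = (\<Sum>i = 0..<?r. int (ns ! p i) - int i)"
        by (simp add: of_nat_diff)
      also have "\<dots> = int (sum_list ns) - int (\<Sum>i<?r. i)"
        by (rule sum_permutes_nth_minus_index[OF p])
      finally have "int (\<Sum>i = 0..<?r. ns ! p i - i) = int (sum_list ns) - int (\<Sum>i<?r. i)" .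
      moreover from this have "(\<Sum>i<?r. i) \<le> sum_list ns" by linarith
      ultimately have "int (\<Sum>i = 0..<?r. ns ! p i - i) = int ?e" by (subst of_nat_diff) simp_all
      then show ?thesis by (simp only: of_nat_eq_iff)
    qed
    finally show ?thesis .
  qed
  have "wronskian (map (\<lambda>m. ?y ^ m) ns) = (\<Sum>p | p permutes {0..<?r}. smult (signof p * ?c p) (?y ^ ?e))"
    unfolding wronskian_map_altdef by (intro sum.cong) (simp_all add: leibniz_term of_int_poly mult.commute)
  also have "\<dots> = smult (det (mat ?r ?r (\<lambda>(i, j). falling_fact (of_nat (ns ! j)) i))) (?y ^ ?e)"
    by (subst det_def'[of _ ?r]) (auto simp: smult_sum intro!: sum.cong prod.cong)
  also have "det (mat ?r ?r (\<lambda>(i, j). falling_fact (of_nat (ns ! j)) i)) = (of_int (vandermonde ns) :: 'a)"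
  proof -
    have "det (mat ?r ?r (\<lambda>(i, j). falling_fact (of_nat (ns ! j)) i)) =
          det (mat ?r ?r (\<lambda>(i, j). falling_fact (map of_nat ns ! j :: 'a) i))"
      by (rule arg_cong[where f = det], rule eq_matI) auto
    also have "\<dots> = (\<Prod>j<?r. \<Prod>i<j. of_nat (ns ! j) - of_nat (ns ! i))"
      using det_falling_fact[of "map of_nat ns"] by simp
    finally show ?thesis by (simp add: vandermonde_def)
  qed
  finally show ?thesis .
qed

lemma wronskian_diff_deg_le:
  fixes f g :: "nat \<Rightarrow> 'a::{idom,semiring_char_0} poly"
  assumes g: "\<And>m. deg_le (g m) (int m)" and fg: "\<And>m. deg_le (f m - g m) (int m - 2)"
  shows "deg_le (wronskian (map f ns) - wronskian (map g ns))
                 (int (sum_list ns) - int (\<Sum>i<length ns. i) - 2)"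
proof -
  let ?r = "length ns"
  let ?F = "\<lambda>h p. \<Prod>i = 0..<?r. (pderiv ^^ i) (h (ns ! p i))"
  have "wronskian (map f ns) - wronskian (map g ns) =
        (\<Sum>p | p permutes {0..<?r}. smult (of_int (sign p)) (?F f p - ?F g p))"
    unfolding wronskian_map_altdef by (simp add: sum_subtractf[symmetric] of_int_poly smult_diff_right)
  also have "deg_le \<dots> (int (sum_list ns) - int (\<Sum>i<?r. i) - 2)"
  proof (intro deg_le_sum deg_le_smult)
    fix p assume "p \<in> {p. p permutes {0..<?r}}"
    then have p: "p permutes {0..<?r}" by simp
    have "deg_le (?F f p - ?F g p) ((\<Sum>i = 0..<?r. int (ns ! p i) - int i) - 2)"
    proof (rule deg_le_prod_diff)
      fix i
      show "deg_le ((pderiv ^^ i) (g (ns ! p i))) (int (ns ! p i) - int i)"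
        using deg_le_higher_pderiv[OF g] .
      show "deg_le ((pderiv ^^ i) (f (ns ! p i)) - (pderiv ^^ i) (g (ns ! p i))) (int (ns ! p i) - int i - 2)"
        using deg_le_higher_pderiv[OF fg[of "ns ! p i"], of i] by (simp add: higher_pderiv_diff algebra_simps)
    qed simp_all
    then show "deg_le (?F f p - ?F g p) (int (sum_list ns) - int (\<Sum>i<?r. i) - 2)"
      by (simp only: sum_permutes_nth_minus_index[OF p])
  qed
  finally show ?thesis .
qed

section \<open>Appell-Schur polynomials\<close>

lemma appell_minus_power_deg_le:
  assumes "appell A"
  shows "deg_le (A m - [:coeff (A 1) 0, 1:] ^ m) (int m - 2)"
proof (induction m)
  case 0
  then show ?case using assms by (simp add: appell_def)
next
  case (Suc k)
  let ?y = "[:coeff (A 1) 0, 1:]"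
  have "pderiv (A (Suc k)) = smult (of_nat (Suc k)) (A k)" using assms unfolding appell_def by auto
  moreover have "pderiv (?y ^ Suc k) = smult (of_nat (Suc k)) (?y ^ k)"
    using pderiv_power_Suc[of ?y k] by (simp add: pderiv_pCons del: power_Suc)
  ultimately have deriv: "pderiv (A (Suc k) - ?y ^ Suc k) = smult (of_nat (Suc k)) (A k - ?y ^ k)"
    by (simp add: pderiv_diff smult_diff_right)
  show ?case
  proof (cases k)
    case 0
    have "pderiv (A 1 - ?y) = 0" using deriv assms 0 by (simp add: appell_def)
    then have "degree (A 1 - ?y) = 0" by (simp add: pderiv_eq_0_iff)
    then have "A 1 - ?y = 0" using degree_0_id[of "A 1 - ?y"] by simp
    then show ?thesis using 0 by simp
  next
    case (Suc k')
    have "deg_le (pderiv (A (Suc k) - ?y ^ Suc k)) (int (Suc k) - 2 - 1)"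
      unfolding deriv using Suc.IH by (auto intro: deg_le_smult)
    then have "deg_le (A (Suc k) - ?y ^ Suc k) (int (Suc k) - 2) \<or> degree (A (Suc k) - ?y ^ Suc k) = 0"
      using deg_le_pderiv by fastforce
    then show ?thesis using \<open>k = Suc k'\<close> by (auto simp: deg_le_def)
  qed
qed

lemma length_shifted_parts [simp]: "length (shifted_parts lam) = length lam"
  by (simp add: shifted_parts_def)

lemma sum_list_shifted_parts: "sum_list (shifted_parts lam) = sum_list lam + (\<Sum>i<length lam. i)"
proof -
  have "sum_list (shifted_parts lam) = (\<Sum>i<length lam. rev lam ! i + i)"
    by (simp add: shifted_parts_def interv_sum_list_conv_sum_set_nat atLeast0LessThan)
  also have "\<dots> = sum_list (rev lam) + (\<Sum>i<length lam. i)"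
    by (simp add: sum.distrib sum_list_sum_nth atLeast0LessThan)
  finally show ?thesis by simp
qed

lemma vandermonde_shifted_parts_neq_0:
  assumes "is_partition lam"
  shows "vandermonde (shifted_parts lam) \<noteq> 0"
proof -
  have "sorted_wrt (\<le>) (rev lam)" using assms unfolding is_partition_def by (simp add: sorted_wrt_rev)
  then have "int (rev lam ! j) + int j \<noteq> int (rev lam ! i) + int i" if "i < j" "j < length lam" for i j
    using that sorted_wrt_nth_less[of "(\<le>)" "rev lam" i j] by simp
  then show ?thesis
    unfolding vandermonde_def shifted_parts_def by (auto simp: prod_zero_iff)
qed

lemma appell_schur_minus_power_deg_le:
  fixes A :: "nat \<Rightarrow> 'a::field_char_0 poly"
  assumes "appell A" and "is_partition lam"
  shows "deg_le (appell_schur A lam - [:coeff (A 1) 0, 1:] ^ sum_list lam) (int (sum_list lam) - 2)"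
proof -
  let ?y = "[:coeff (A 1) 0, 1:]" and ?ns = "shifted_parts lam"
  let ?V = "of_int (vandermonde ?ns) :: 'a"
  have "?V \<noteq> 0" using vandermonde_shifted_parts_neq_0[OF assms(2)] by simp
  have "wronskian (map (\<lambda>m. ?y ^ m) ?ns) = smult ?V (?y ^ sum_list lam)"
    by (simp add: wronskian_linear_powers sum_list_shifted_parts)
  then have "appell_schur A lam - ?y ^ sum_list lam =
             smult (inverse ?V) (wronskian (map A ?ns) - wronskian (map (\<lambda>m. ?y ^ m) ?ns))"
    using \<open>?V \<noteq> 0\<close> unfolding appell_schur_def by (simp add: smult_diff_right)
  moreover have "deg_le (wronskian (map A ?ns) - wronskian (map (\<lambda>m. ?y ^ m) ?ns)) (int (sum_list lam) - 2)"
    using wronskian_diff_deg_le[of "\<lambda>m. ?y ^ m" A ?ns] appell_minus_power_deg_le[OF assms(1)]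
      deg_le_power[of ?y 1] by (simp add: deg_le_def sum_list_shifted_parts)
  ultimately show ?thesis by (simp add: deg_le_smult)
qed

theorem corollary5p4:
  fixes A :: "nat \<Rightarrow> 'a::field_char_0 poly" and n :: nat
  assumes "appell A" and "n \<ge> 2"
  shows "degree (plancherel_expect n (\<lambda>lam. (appell_schur A lam)\<^sup>2)
                 - (plancherel_expect n (appell_schur A))\<^sup>2) \<le> 2 * n - 4"
proof -
  define y where "y = [:coeff (A 1) 0, 1:]"
  define Q where "Q lam = appell_schur A lam - y ^ n" for lam
  let ?S = "partitions_of n" and ?w = "\<lambda>lam. [:plancherel n lam :: 'a:]"
  have expect: "plancherel_expect n f = (\<Sum>lam\<in>?S. ?w lam * f lam)" for f
    unfolding plancherel_expect_def by simp
  have "(\<Sum>lam\<in>?S. ?w lam) = 1" by (simp add: sum_pCons_0 sum_plancherel)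
  from weighted_variance_shift[OF this, of "y ^ n" Q]
  have variance: "plancherel_expect n (\<lambda>lam. (appell_schur A lam)\<^sup>2) - (plancherel_expect n (appell_schur A))\<^sup>2 =
      (\<Sum>lam\<in>?S. smult (plancherel n lam) ((Q lam)\<^sup>2)) - (\<Sum>lam\<in>?S. smult (plancherel n lam) (Q lam))\<^sup>2"
    unfolding expect Q_def by simp
  have Q_deg: "deg_le (Q lam) (int n - 2)" if "lam \<in> ?S" for lam
    using appell_schur_minus_power_deg_le[OF assms(1)] that unfolding Q_def y_def partitions_of_def by auto
  then have "deg_le (\<Sum>lam\<in>?S. smult (plancherel n lam) ((Q lam)\<^sup>2)) (int 2 * (int n - 2))"
    by (intro deg_le_sum deg_le_smult deg_le_power)
  moreover have "deg_le ((\<Sum>lam\<in>?S. smult (plancherel n lam) (Q lam))\<^sup>2) (int 2 * (int n - 2))"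
    using Q_deg by (intro deg_le_sum deg_le_smult deg_le_power)
  ultimately have "deg_le (plancherel_expect n (\<lambda>lam. (appell_schur A lam)\<^sup>2) -
                           (plancherel_expect n (appell_schur A))\<^sup>2) (int 2 * (int n - 2))"
    unfolding variance by (rule deg_le_diff)
  then show ?thesis using assms(2) by (auto simp: deg_le_def)
qed

end
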